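(* Let $h>0$, $\beta>0$, $k\in\mathbb{N}$, $f(x)=hx^k$, and $\mathcal{B}(\alpha)=f(\alpha)+\sqrt2\beta\sqrt{1-\alpha^2}$ for $\alpha\in[-1,1]$. When $k=1$, for all $\beta>0$, $\sup_{\alpha\in[-1,1]}\mathcal{B}(\alpha)=\sqrt{h^2+2\beta^2}$ and the unique local and global maximizer of $\mathcal{B}$ is $\alpha=\frac{h}{\sqrt{h^2+2\beta^2}}$. When $k=2$ and $\beta\ge\beta_c(2,h)$, the unique local and global maximizer of $\mathcal{B}$ is $\alpha=0$; when $k=2$ and $\beta<\beta_c(2,h)$, $\sup_{\alpha\in[-1,1]}\mathcal{B}(\alpha)=h+\frac{\beta^2}{2h}$ and the unique local and global maximizers are $\alpha=\pm\sqrt{1-\frac{\beta^2}{2h^2}}$. When $k\ge3$ and $\beta\ge\tilde\beta_c(k,h)$, the unique local and global maximizer of $\mathcal{B}$ is $\alpha=0$. When $k\ge3$ and $\beta<\tilde\beta_c(k,h)$, let $\hat\alpha$ be the largest solution of $$\alpha^{2(k-2)}(1-\alpha^2)=2\left(\frac{\beta}{hk}\right)^2,$$ which is the unique solution of this equation in $\big(\sqrt{\tfrac{k-2}{k-1}},1\big)$. Then $\alpha=0$ and $\alpha=\hat\alpha$ are the only local maximizers of $\mathcal{B}$ in $[0,1]$; if $\beta>\beta_c(k,h)$ the global maximizer in $[0,1]$ is $\alpha=0$, if $\beta=\beta_c(k,h)$ both $0$ and $\hat\alpha$ are global maximizers, and if $\beta<\beta_c(k,h)$ the global maximizer in $[0,1]$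 is $\hat\alpha$. When $k\ge4$ is even, $-\hat\alpha$ is also a local (resp. global) maximizer whenever $\hat\alpha$ is, and it is the unique such one in $[-1,0)$; when $k\ge3$ is odd, $\mathcal{B}$ has no local maximizers in $[-1,0)$.
   Context: Critical values: $\beta_c(1,h)=\infty$, $\beta_c(2,h)=\sqrt2h$, and for $k\ge3$, $\beta_c(k,h)=\frac{h}{\sqrt2}\frac{k-1}{k-2}\left(1-\frac{1}{(k-1)^2}\right)^{k/2}$; for $k\ge3$, $\tilde\beta_c(k,h)=\frac{hk}{\sqrt2}\frac{(k-2)^{(k-2)/2}}{(k-1)^{(k-1)/2}}$ (which exceeds $\beta_c(k,h)$). *)

theory Defs
  imports Complex_Main
begin

definition Bfun :: "real \<Rightarrow> real \<Rightarrow> nat \<Rightarrow> real \<Rightarrow> real" where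
  "Bfun h \<beta> k \<alpha> = h * \<alpha> ^ k + sqrt 2 * \<beta> * sqrt (1 - \<alpha>\<^sup>2)"

definition local_maximizer :: "(real \<Rightarrow> real) \<Rightarrow> real \<Rightarrow> bool" where
  "local_maximizer f x \<longleftrightarrow> x \<in> {-1..1} \<and>
     (\<exists>e>0. \<forall>y\<in>{-1..1}. \<bar>y - x\<bar> < e \<longrightarrow> f y \<le> f x)"

definition global_maximizer :: "(real \<Rightarrow> real) \<Rightarrow> real \<Rightarrow> bool" where
  "global_maximizer f x \<longleftrightarrow> x \<in> {-1..1} \<and> (\<forall>y\<in>{-1..1}. f y \<le> f x)"

text \<open>Critical value beta_c(k,h) for k >= 2 (beta_c(1,h) = infinity is never used).\<close>
definition beta_c :: "nat \<Rightarrow> real \<Rightarrow> real" where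
  "beta_c k h = (if k = 2 then sqrt 2 * h
     else h / sqrt 2 * ((real k - 1) / (real k - 2))
          * (1 - 1 / (real k - 1)\<^sup>2) powr (real k / 2))"

definition beta_tilde_c :: "nat \<Rightarrow> real \<Rightarrow> real" where
  "beta_tilde_c k h = h * real k / sqrt 2
     * (real k - 2) powr ((real k - 2) / 2) / (real k - 1) powr ((real k - 1) / 2)"

end

theory Submission
  imports Defs
begin

(* On (-1, 1) the derivative of B has the sign of h k x^(k-1) sqrt (1 - x^2) - sqrt 2 beta x.
   For k = 1 this changes sign once; for k >= 2 and 0 < x < 1 it has the sign of
   phi (k - 2) x - 2 (beta / (h k))^2, where phi n x = x^(2n) (1 - x^2) increases up to
   sqrt (n / (n + 1)) and then decreases.  Hence B decreases on [0, 1] when the level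
   2 (beta / (h k))^2 is at least max phi, which is the condition beta >= tilde beta_c, and
   otherwise B decreases, increases and decreases again, the turning points being the two
   solutions of phi = level.  For the larger one, a, the critical point equation gives
   B a - B 0 = h a^(k-2) (1 - s) (1 - (k - 1) s) with s = sqrt (1 - a^2), so B a exceeds B 0
   iff a > alpha_c = sqrt (1 - 1/(k-1)^2); as phi is decreasing beyond its maximum this is
   the comparison of beta with beta_c.  Negative arguments reduce to positive ones by
   evenness when k is even, and B is increasing on [-1, 0] when k is odd. *)

section \<open>Strict monotonicity and maximizers on the interval\<close>

lemma strict_antimono_on_atLeastAtMost_join:
  fixes f :: "real \<Rightarrow> real"
  assumes ab: "strict_antimono_on {a..b} f" and bc: "strict_antimono_on {b..c} f"
  shows "strict_antimono_on {a..c} f"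
proof (rule monotone_onI)
  fix x y assume x: "x \<in> {a..c}" and y: "y \<in> {a..c}" and "x < y"
  consider "y \<le> b" | "b \<le> x" | "x < b" "b < y" by linarith
  then show "f y < f x"
  proof cases
    case 3
    then have "f b < f x" "f y < f b"
      using monotone_onD[OF ab, of x b] monotone_onD[OF bc, of b y] x y by auto
    then show ?thesis by simp
  qed (use monotone_onD[OF ab, of x y] monotone_onD[OF bc, of x y] x y \<open>x < y\<close> in auto)
qed

lemma strict_antimono_on_less:
  fixes f :: "real \<Rightarrow> real"
  assumes "strict_antimono_on S f" "x \<in> S" "y \<in> S"
  shows "f x < f y \<longleftrightarrow> y < x"
  using assms monotone_onD[OF assms(1), of x y] monotone_onD[OF assms(1), of y x]
  by (cases x y rule: linorder_cases) auto

lemma strict_antimono_on_reflect: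
  fixes f :: "real \<Rightarrow> real"
  assumes "\<And>x. f (- x) = f x" and "strict_mono_on {a..b} f"
  shows "strict_antimono_on {-b..-a} f"
proof (rule monotone_onI)
  fix x y assume "x \<in> {-b..-a}" "y \<in> {-b..-a}" "x < y"
  then have "f (- y) < f (- x)" using monotone_onD[OF assms(2), of "- y" "- x"] by auto
  then show "f y < f x" using assms(1) by simp
qed

lemma strict_mono_on_reflect:
  fixes f :: "real \<Rightarrow> real"
  assumes "\<And>x. f (- x) = f x" and "strict_antimono_on {a..b} f"
  shows "strict_mono_on {-b..-a} f"
proof (rule monotone_onI)
  fix x y assume "x \<in> {-b..-a}" "y \<in> {-b..-a}" "x < y"
  then have "f (- x) < f (- y)" using monotone_onD[OF assms(2), of "- y" "- x"] by auto
  then show "f x < f y" using assms(1) by simp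
qed

lemma strict_mono_on_if_deriv_pos:
  fixes f f' :: "real \<Rightarrow> real"
  assumes "continuous_on {a..b} f"
    and "\<And>x. a < x \<Longrightarrow> x < b \<Longrightarrow> (f has_real_derivative f' x) (at x)"
    and "\<And>x. a < x \<Longrightarrow> x < b \<Longrightarrow> 0 < f' x"
  shows "strict_mono_on {a..b} f"
proof (rule monotone_onI)
  fix x y assume "x \<in> {a..b}" "y \<in> {a..b}" "x < y"
  show "f x < f y"
  proof (rule DERIV_pos_imp_increasing_open[of x y f])
    fix z assume "x < z" "z < y"
    then have "a < z" "z < b" using \<open>x \<in> {a..b}\<close> \<open>y \<in> {a..b}\<close> by auto
    then show "\<exists>d. (f has_real_derivative d) (at z) \<and> 0 < d"
      using assms(2,3) by blast
  qed (use \<open>x < y\<close> \<open>x \<in> {a..b}\<close> \<open>y \<in> {a..b}\<close> in \<open>auto intro: continuous_on_subset[OF assms(1)]\<close>)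
qed

lemma strict_antimono_on_if_deriv_neg:
  fixes f f' :: "real \<Rightarrow> real"
  assumes "continuous_on {a..b} f"
    and "\<And>x. a < x \<Longrightarrow> x < b \<Longrightarrow> (f has_real_derivative f' x) (at x)"
    and "\<And>x. a < x \<Longrightarrow> x < b \<Longrightarrow> f' x < 0"
  shows "strict_antimono_on {a..b} f"
proof (rule monotone_onI)
  fix x y assume "x \<in> {a..b}" "y \<in> {a..b}" "x < y"
  show "f y < f x"
  proof (rule DERIV_neg_imp_decreasing_open[of x y f])
    fix z assume "x < z" "z < y"
    then have "a < z" "z < b" using \<open>x \<in> {a..b}\<close> \<open>y \<in> {a..b}\<close> by auto
    then show "\<exists>d. (f has_real_derivative d) (at z) \<and> d < 0"
      using assms(2,3) by blast
  qed (use \<open>x < y\<close> \<open>x \<in> {a..b}\<close> \<open>y \<in> {a..b}\<close> in \<open>auto intro: continuous_on_subset[OF assms(1)]\<close>)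
qed

lemma not_local_maximizer_if_strict_mono_on:
  assumes "strict_mono_on {a..b} f" "a \<le> x" "x < b" "b \<le> 1"
  shows "\<not> local_maximizer f x"
proof
  assume "local_maximizer f x"
  then obtain e where x: "x \<in> {-1..1}" and "e > 0" and e: "\<forall>y\<in>{-1..1}. \<bar>y - x\<bar> < e \<longrightarrow> f y \<le> f x"
    unfolding local_maximizer_def by blast
  define y where "y = min (x + e / 2) b"
  have "x < y" "y \<le> b" "y - x < e" using \<open>e > 0\<close> assms(3) by (auto simp: y_def)
  then have "y \<in> {-1..1}" "\<bar>y - x\<bar> < e" "f x < f y"
    using x assms(2,4) monotone_onD[OF assms(1), of x y] by auto
  then show False using e by fastforce
qed

lemma not_local_maximizer_if_strict_antimono_on:
  assumes "strict_antimono_on {a..b} f" "a < x" "x \<le> b" "-1 \<le> a"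
  shows "\<not> local_maximizer f x"
proof
  assume "local_maximizer f x"
  then obtain e where x: "x \<in> {-1..1}" and "e > 0" and e: "\<forall>y\<in>{-1..1}. \<bar>y - x\<bar> < e \<longrightarrow> f y \<le> f x"
    unfolding local_maximizer_def by blast
  define y where "y = max (x - e / 2) a"
  have "y < x" "a \<le> y" "x - y < e" using \<open>e > 0\<close> assms(2) by (auto simp: y_def)
  then have "y \<in> {-1..1}" "\<bar>y - x\<bar> < e" "f x < f y"
    using x assms(3,4) monotone_onD[OF assms(1), of y x] by auto
  then show False using e by fastforce
qed

lemma local_maximizer_if_peak:
  assumes "strict_mono_on {a..b} f" "strict_antimono_on {b..c} f" "a < b" "b < c" "b \<in> {-1..1}"
  shows "local_maximizer f b"
  unfolding local_maximizer_def
proof (intro conjI exI[of _ "min (b - a) (c - b)"] ballI impI)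
  fix y assume "\<bar>y - b\<bar> < min (b - a) (c - b)"
  then show "f y \<le> f b"
    using monotone_onD[OF assms(1), of y b] monotone_onD[OF assms(2), of b y]
    by (cases y b rule: linorder_cases) auto
qed (use assms in auto)

lemma local_maximizer_if_global_maximizer:
  "global_maximizer f x \<Longrightarrow> local_maximizer f x"
  unfolding global_maximizer_def local_maximizer_def by (auto intro: exI[of _ 1])

lemma local_maximizer_reflect:
  assumes "\<And>x. f (- x) = f x" "local_maximizer f x"
  shows "local_maximizer f (- x)"
proof -
  obtain e where "x \<in> {-1..1}" "e > 0" and e: "\<forall>y\<in>{-1..1}. \<bar>y - x\<bar> < e \<longrightarrow> f y \<le> f x"
    using assms(2) unfolding local_maximizer_def by blast
  have "f y \<le> f (- x)" if "y \<in> {-1..1}" "\<bar>y + x\<bar> < e" for y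
    using e[rule_format, of "- y"] that assms(1)[of y] assms(1)[of x] by (simp add: abs_minus_commute)
  then show ?thesis
    unfolding local_maximizer_def using \<open>x \<in> {-1..1}\<close> \<open>e > 0\<close> by auto
qed

lemma global_maximizer_reflect:
  "(\<And>x. f (- x) = f x) \<Longrightarrow> global_maximizer f x \<Longrightarrow> global_maximizer f (- x)"
  unfolding global_maximizer_def by (metis atLeastAtMost_iff minus_le_iff neg_le_iff_le)

lemma SUP_eq_if_global_maximizer:
  "global_maximizer f x \<Longrightarrow> (SUP a\<in>{-1..1}. f a) = f x"
  unfolding global_maximizer_def by (intro cSup_eq_maximum) auto

lemma le_right_end_if_strict_mono_on:
  fixes f :: "real \<Rightarrow> real"
  shows "strict_mono_on {a..b} f \<Longrightarrow> x \<in> {a..b} \<Longrightarrow> f x \<le> f b"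
  by (cases "x = b") (auto dest: monotone_onD[of _ _ _ f x b])

lemma le_left_end_if_strict_antimono_on:
  fixes f :: "real \<Rightarrow> real"
  shows "strict_antimono_on {a..b} f \<Longrightarrow> x \<in> {a..b} \<Longrightarrow> f x \<le> f a"
  by (cases "x = a") (auto dest: monotone_onD[of _ _ _ f a x])

lemma maximizers_unimodal:
  fixes f :: "real \<Rightarrow> real"
  assumes inc: "strict_mono_on {-1..p} f" and dec: "strict_antimono_on {p..1} f"
    and "-1 < p" "p < 1"
  shows "{x. local_maximizer f x} = {p}" "{x. global_maximizer f x} = {p}"
proof -
  have local_iff: "local_maximizer f x \<longleftrightarrow> x = p" for x
  proof
    assume "local_maximizer f x"
    moreover have "x \<in> {-1..1}" using calculation unfolding local_maximizer_def by simp
    ultimately show "x = p"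
      using not_local_maximizer_if_strict_mono_on[OF inc, of x]
        not_local_maximizer_if_strict_antimono_on[OF dec, of x] assms(3,4)
      by (cases x p rule: linorder_cases) auto
  qed (use local_maximizer_if_peak[OF inc dec] assms(3,4) in auto)
  have "f x \<le> f p" if "x \<in> {-1..1}" for x
    using that le_right_end_if_strict_mono_on[OF inc, of x] le_left_end_if_strict_antimono_on[OF dec, of x]
    by (cases "x \<le> p") auto
  then have "global_maximizer f p"
    unfolding global_maximizer_def using assms(3,4) by auto
  then show "{x. local_maximizer f x} = {p}" "{x. global_maximizer f x} = {p}"
    using local_iff local_maximizer_if_global_maximizer by blast+
qed

lemma maximizers_even_bimodal:
  fixes f :: "real \<Rightarrow> real"
  assumes even: "\<And>x. f (- x) = f x"
    and inc: "strict_mono_on {0..p} f" and dec: "strict_antimono_on {p..1} f"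
    and "0 < p" "p < 1"
  shows "{x. local_maximizer f x} = {p, - p}" "{x. global_maximizer f x} = {p, - p}"
proof -
  have dec': "strict_antimono_on {-p..0} f" using strict_antimono_on_reflect[OF even inc] by simp
  have inc': "strict_mono_on {-1..-p} f" using strict_mono_on_reflect[OF even dec] .
  have local_iff: "local_maximizer f x \<longleftrightarrow> x = p \<or> x = - p" for x
  proof
    assume "local_maximizer f x"
    moreover have "x \<in> {-1..1}" using calculation unfolding local_maximizer_def by simp
    ultimately show "x = p \<or> x = - p"
      using not_local_maximizer_if_strict_mono_on[OF inc', of x]
        not_local_maximizer_if_strict_antimono_on[OF dec', of x]
        not_local_maximizer_if_strict_mono_on[OF inc, of x]
        not_local_maximizer_if_strict_antimono_on[OF dec, of x] assms(4,5)
      by (cases x "- p" rule: linorder_cases; cases x "0::real" rule: linorder_cases;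
          cases x p rule: linorder_cases) auto
  qed (use local_maximizer_if_peak[OF inc dec] local_maximizer_if_peak[OF inc' dec'] assms(4,5) in auto)
  have "f x \<le> f p" if "x \<in> {0..1}" for x
    using that le_right_end_if_strict_mono_on[OF inc, of x] le_left_end_if_strict_antimono_on[OF dec, of x]
    by (cases "x \<le> p") auto
  note le_on_nonneg = this
  have "f x \<le> f p" if "x \<in> {-1..1}" for x
    using that le_on_nonneg[of x] le_on_nonneg[of "- x"] even[of x] by (cases "0 \<le> x") auto
  then have "global_maximizer f p"
    unfolding global_maximizer_def using assms(4,5) by auto
  then have "global_maximizer f x \<longleftrightarrow> x = p \<or> x = - p" for x
    using global_maximizer_reflect[of f, OF even] local_iff local_maximizer_if_global_maximizer by fastforce
  then show "{x. local_maximizer f x} = {p, - p}" "{x. global_maximizer f x} = {p, - p}"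
    using local_iff by auto
qed

lemma local_maximizers_on_unit_interval:
  fixes f :: "real \<Rightarrow> real"
  assumes inc0: "strict_mono_on {-a..0} f" and dec0: "strict_antimono_on {0..a} f"
    and inc: "strict_mono_on {a..q} f" and dec: "strict_antimono_on {q..1} f"
    and "0 < a" "a < q" "q < 1"
  shows "{x\<in>{0..1}. local_maximizer f x} = {0, q}"
    and "\<forall>x\<in>{0..1}. f x \<le> max (f 0) (f q)"
proof -
  have "\<not> local_maximizer f x" if "x \<in> {0..1}" "x \<noteq> 0" "x \<noteq> q" for x
  proof -
    have "0 < x \<and> x \<le> a \<or> a \<le> x \<and> x < q \<or> q < x \<and> x \<le> 1" using that by auto
    then show ?thesis
      using not_local_maximizer_if_strict_antimono_on[OF dec0, of x]
        not_local_maximizer_if_strict_mono_on[OF inc, of x]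
        not_local_maximizer_if_strict_antimono_on[OF dec, of x] assms(5-7) by linarith
  qed
  moreover have "local_maximizer f 0" "local_maximizer f q"
    using local_maximizer_if_peak[OF inc0 dec0] local_maximizer_if_peak[OF inc dec] assms(5-7) by auto
  ultimately show "{x\<in>{0..1}. local_maximizer f x} = {0, q}"
    using assms(5-7) by auto
  have "f x \<le> max (f 0) (f q)" if "x \<in> {0..1}" for x
  proof -
    have "x \<in> {0..a} \<or> x \<in> {a..q} \<or> x \<in> {q..1}" using that by auto
    then show ?thesis
      using le_left_end_if_strict_antimono_on[OF dec0, of x] le_right_end_if_strict_mono_on[OF inc, of x]
        le_left_end_if_strict_antimono_on[OF dec, of x] by linarith
  qed
  then show "\<forall>x\<in>{0..1}. f x \<le> max (f 0) (f q)" by blast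
qed

lemma global_maximizers_two_candidates:
  fixes f :: "real \<Rightarrow> real"
  assumes "\<forall>x\<in>{-1..1}. f x \<le> max (f p) (f q)" "p \<in> {-1..1}" "q \<in> {-1..1}"
    and "{x\<in>S. local_maximizer f x} = {p, q}"
  shows "{x\<in>S. global_maximizer f x} = {x\<in>{p, q}. max (f p) (f q) \<le> f x}"
proof -
  have "global_maximizer f x \<longleftrightarrow> max (f p) (f q) \<le> f x" if "x \<in> {p, q}" for x
  proof
    assume "global_maximizer f x"
    then show "max (f p) (f q) \<le> f x" using assms(2,3) unfolding global_maximizer_def by simp
  next
    assume "max (f p) (f q) \<le> f x"
    then show "global_maximizer f x"
      using assms(1-3) that unfolding global_maximizer_def by force
  qed
  moreover have "x \<in> S \<and> global_maximizer f x \<longrightarrow> x \<in> {p, q}" for x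
    using assms(4) local_maximizer_if_global_maximizer by blast
  moreover have "x \<in> {p, q} \<longrightarrow> x \<in> S" for x
    using assms(4) by blast
  ultimately show ?thesis by blast
qed

lemma local_maximizers_negative_if_even:
  fixes f :: "real \<Rightarrow> real"
  assumes "\<And>x. f (- x) = f x" "{x\<in>{0..1}. local_maximizer f x} = {0, q}" "0 < q"
  shows "{x\<in>{-1..<0}. local_maximizer f x} = {- q}"
proof -
  have reflect: "local_maximizer f (- x) \<longleftrightarrow> local_maximizer f x" for x
    using local_maximizer_reflect[of f, OF assms(1), of x] local_maximizer_reflect[of f, OF assms(1), of "- x"]
    by auto
  have nonneg: "y \<in> {0<..1} \<and> local_maximizer f y \<longleftrightarrow> y = q" for y
    using assms(2)[unfolded set_eq_iff, rule_format, of y] assms(3) by auto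
  show ?thesis
  proof (rule set_eqI)
    fix x
    show "x \<in> {x\<in>{-1..<0}. local_maximizer f x} \<longleftrightarrow> x \<in> {- q}"
      using reflect[of x] nonneg[of "- x"] by auto
  qed
qed

lemma global_maximizers_negative_if_even:
  fixes f :: "real \<Rightarrow> real"
  assumes "\<And>x. f (- x) = f x" "{x\<in>{-1..<0}. local_maximizer f x} = {- q}" "global_maximizer f q"
  shows "{x\<in>{-1..<0}. global_maximizer f x} = {- q}"
  using assms local_maximizer_if_global_maximizer global_maximizer_reflect[of f, OF assms(1,3)] by blast

section \<open>Monotonicity of B\<close>

lemma less_iff_power2_less:
  fixes u v :: real
  assumes "0 \<le> u" "0 \<le> v"
  shows "u < v \<longleftrightarrow> u\<^sup>2 < v\<^sup>2"
  using power_mono_iff[of v u 2] assms by (simp add: not_le[symmetric])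

lemma Bfun_even: "even k \<Longrightarrow> Bfun h \<beta> k (- x) = Bfun h \<beta> k x"
  unfolding Bfun_def by simp

lemma continuous_on_Bfun: "continuous_on A (Bfun h \<beta> k)"
  unfolding Bfun_def[abs_def] by (intro continuous_intros)

lemma Bfun_has_real_derivative:
  assumes "-1 < x" "x < 1"
  shows "(Bfun h \<beta> k has_real_derivative
           h * real k * x ^ (k - 1) - sqrt 2 * \<beta> * x / sqrt (1 - x\<^sup>2)) (at x)"
proof -
  have "0 < 1 - x\<^sup>2" using assms by (simp add: power2_less_1_iff)
  then have "(Bfun h \<beta> k has_real_derivative
      h * (real k * x ^ (k - 1)) + sqrt 2 * \<beta> * (inverse (sqrt (1 - x\<^sup>2)) / 2 * - (2 * x))) (at x)"
    unfolding Bfun_def[abs_def]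
    by (intro derivative_intros DERIV_chain2[OF DERIV_real_sqrt]) (auto intro!: derivative_eq_intros)
  then show ?thesis by (simp add: field_simps)
qed

lemma Bfun_strict_mono_on:
  assumes "-1 \<le> a" "b \<le> 1"
    and "\<And>x. a < x \<Longrightarrow> x < b \<Longrightarrow> sqrt 2 * \<beta> * x < h * real k * x ^ (k - 1) * sqrt (1 - x\<^sup>2)"
  shows "strict_mono_on {a..b} (Bfun h \<beta> k)"
proof (rule strict_mono_on_if_deriv_pos[OF continuous_on_Bfun Bfun_has_real_derivative])
  fix x assume "a < x" "x < b"
  moreover have "0 < sqrt (1 - x\<^sup>2)"
    using calculation assms(1,2) by (simp add: power2_less_1_iff)
  ultimately show "0 < h * real k * x ^ (k - 1) - sqrt 2 * \<beta> * x / sqrt (1 - x\<^sup>2)"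
    using assms(3) by (simp add: pos_divide_less_eq)
qed (use assms in auto)

lemma Bfun_strict_antimono_on:
  assumes "-1 \<le> a" "b \<le> 1"
    and "\<And>x. a < x \<Longrightarrow> x < b \<Longrightarrow> h * real k * x ^ (k - 1) * sqrt (1 - x\<^sup>2) < sqrt 2 * \<beta> * x"
  shows "strict_antimono_on {a..b} (Bfun h \<beta> k)"
proof (rule strict_antimono_on_if_deriv_neg[OF continuous_on_Bfun Bfun_has_real_derivative])
  fix x assume "a < x" "x < b"
  moreover have "0 < sqrt (1 - x\<^sup>2)"
    using calculation assms(1,2) by (simp add: power2_less_1_iff)
  ultimately show "h * real k * x ^ (k - 1) - sqrt 2 * \<beta> * x / sqrt (1 - x\<^sup>2) < 0"
    using assms(3) by (simp add: pos_less_divide_eq)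
qed (use assms in auto)

lemma Bfun_odd_strict_mono_on_nonpos:
  assumes "odd k" "h > 0" "\<beta> > 0"
  shows "strict_mono_on {-1..0} (Bfun h \<beta> k)"
proof (rule Bfun_strict_mono_on)
  fix x :: real assume "-1 < x" "x < 0"
  then have "sqrt 2 * \<beta> * x < 0" using assms(3) by (simp add: mult_pos_neg)
  moreover have "0 \<le> x ^ (k - 1)" using assms(1) by (simp add: zero_le_even_power)
  then have "0 \<le> h * real k * x ^ (k - 1) * sqrt (1 - x\<^sup>2)"
    using assms(2) \<open>-1 < x\<close> \<open>x < 0\<close> by (simp add: abs_square_le_1)
  ultimately show "sqrt 2 * \<beta> * x < h * real k * x ^ (k - 1) * sqrt (1 - x\<^sup>2)" by linarith
qed auto

definition phi :: "nat \<Rightarrow> real \<Rightarrow> real" where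
  "phi n x = x ^ (2 * n) * (1 - x\<^sup>2)"

lemma Bfun_slope_comparison:
  fixes h \<beta> x :: real
  assumes "2 \<le> k" "h > 0" "\<beta> > 0" "0 < x" "x < 1"
  shows "(sqrt 2 * \<beta> * x < h * real k * x ^ (k - 1) * sqrt (1 - x\<^sup>2)
            \<longleftrightarrow> 2 * (\<beta> / (h * real k))\<^sup>2 < phi (k - 2) x)
       \<and> (h * real k * x ^ (k - 1) * sqrt (1 - x\<^sup>2) < sqrt 2 * \<beta> * x
            \<longleftrightarrow> phi (k - 2) x < 2 * (\<beta> / (h * real k))\<^sup>2)"
proof -
  define u where "u = h * real k * x ^ (k - 2) * sqrt (1 - x\<^sup>2)"
  have "x ^ (k - 1) = x * x ^ (k - 2)"
    using assms(1) by (simp flip: power_Suc add: Suc_diff_Suc numeral_2_eq_2)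
  then have "h * real k * x ^ (k - 1) * sqrt (1 - x\<^sup>2) = x * u" by (simp add: u_def)
  then have cancel_x: "(sqrt 2 * \<beta> * x < h * real k * x ^ (k - 1) * sqrt (1 - x\<^sup>2) \<longleftrightarrow> sqrt 2 * \<beta> < u)
      \<and> (h * real k * x ^ (k - 1) * sqrt (1 - x\<^sup>2) < sqrt 2 * \<beta> * x \<longleftrightarrow> u < sqrt 2 * \<beta>)"
    using assms(4) by (simp add: mult.commute)
  have hk: "0 < (h * real k)\<^sup>2" using assms(1,2) by simp
  have "u\<^sup>2 = (h * real k)\<^sup>2 * phi (k - 2) x"
    using assms(4,5) by (simp add: u_def phi_def power_mult_distrib power_mult[symmetric]
        mult.commute[of 2] power2_less_1_iff abs_square_less_1 less_imp_le)
  moreover have "(sqrt 2 * \<beta>)\<^sup>2 = (h * real k)\<^sup>2 * (2 * (\<beta> / (h * real k))\<^sup>2)"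
    using assms(1,2) by (simp add: power_mult_distrib power_divide)
  moreover have "0 \<le> u" "0 \<le> sqrt 2 * \<beta>"
    using assms by (simp_all add: u_def power2_less_1_iff abs_square_less_1 less_imp_le)
  ultimately show ?thesis
    using cancel_x less_iff_power2_less[of "sqrt 2 * \<beta>" u] less_iff_power2_less[of u "sqrt 2 * \<beta>"]
      mult_less_cancel_left_pos[OF hk] by simp
qed

lemma Bfun_strict_mono_on_if_phi:
  assumes "2 \<le> k" "h > 0" "\<beta> > 0" "0 \<le> a" "b \<le> 1"
    and "\<And>x. a < x \<Longrightarrow> x < b \<Longrightarrow> 2 * (\<beta> / (h * real k))\<^sup>2 < phi (k - 2) x"
  shows "strict_mono_on {a..b} (Bfun h \<beta> k)"
  using assms Bfun_slope_comparison[OF assms(1-3)] by (intro Bfun_strict_mono_on) auto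

lemma Bfun_strict_antimono_on_if_phi:
  assumes "2 \<le> k" "h > 0" "\<beta> > 0" "0 \<le> a" "b \<le> 1"
    and "\<And>x. a < x \<Longrightarrow> x < b \<Longrightarrow> phi (k - 2) x < 2 * (\<beta> / (h * real k))\<^sup>2"
  shows "strict_antimono_on {a..b} (Bfun h \<beta> k)"
  using assms Bfun_slope_comparison[OF assms(1-3)] by (intro Bfun_strict_antimono_on) auto

section \<open>The case k = 1\<close>

lemma Bfun_1_slope_comparison:
  fixes h \<beta> x :: real
  assumes "h > 0" "\<beta> > 0" "-1 < x" "x < 1"
  shows "(sqrt 2 * \<beta> * x < h * sqrt (1 - x\<^sup>2) \<longleftrightarrow> x * sqrt (h\<^sup>2 + 2 * \<beta>\<^sup>2) < h)
       \<and> (h * sqrt (1 - x\<^sup>2) < sqrt 2 * \<beta> * x \<longleftrightarrow> h < x * sqrt (h\<^sup>2 + 2 * \<beta>\<^sup>2))"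
proof -
  have s: "0 < sqrt (1 - x\<^sup>2)" using assms(3,4) by (simp add: power2_less_1_iff)
  show ?thesis
  proof (cases "x \<le> 0")
    case True
    then have "sqrt 2 * \<beta> * x \<le> 0" "x * sqrt (h\<^sup>2 + 2 * \<beta>\<^sup>2) \<le> 0"
      using assms(2) by (simp_all add: mult_nonneg_nonpos mult_nonpos_nonneg)
    moreover have "0 < h * sqrt (1 - x\<^sup>2)" using assms(1) s by simp
    ultimately show ?thesis using assms(1) by linarith
  next
    case False
    have squares: "(sqrt 2 * \<beta> * x)\<^sup>2 = 2 * \<beta>\<^sup>2 * x\<^sup>2" "(h * sqrt (1 - x\<^sup>2))\<^sup>2 = h\<^sup>2 * (1 - x\<^sup>2)"
      "(x * sqrt (h\<^sup>2 + 2 * \<beta>\<^sup>2))\<^sup>2 = x\<^sup>2 * (h\<^sup>2 + 2 * \<beta>\<^sup>2)"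
      using s by (simp_all add: power_mult_distrib)
    have nonneg: "0 \<le> sqrt 2 * \<beta> * x" "0 \<le> h * sqrt (1 - x\<^sup>2)" "0 \<le> x * sqrt (h\<^sup>2 + 2 * \<beta>\<^sup>2)" "0 \<le> h"
      using False assms(1,2) s by simp_all
    show ?thesis
      using less_iff_power2_less[OF nonneg(1,2)] less_iff_power2_less[OF nonneg(2,1)]
        less_iff_power2_less[OF nonneg(3,4)] less_iff_power2_less[OF nonneg(4,3)]
      unfolding squares by (simp add: algebra_simps)
  qed
qed

lemma Bfun_1_maximizers:
  fixes h \<beta> :: real
  assumes "h > 0" "\<beta> > 0"
  defines "p \<equiv> h / sqrt (h\<^sup>2 + 2 * \<beta>\<^sup>2)"
  shows "{x. local_maximizer (Bfun h \<beta> 1) x} = {p}"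
    and "{x. global_maximizer (Bfun h \<beta> 1) x} = {p}"
    and "(SUP a\<in>{-1..1}. Bfun h \<beta> 1 a) = sqrt (h\<^sup>2 + 2 * \<beta>\<^sup>2)"
proof -
  define R where "R = sqrt (h\<^sup>2 + 2 * \<beta>\<^sup>2)"
  have "h < R" unfolding R_def using assms(1,2) by (simp add: real_less_rsqrt)
  then have "0 < p" "p < 1" "0 < R" using assms(1) by (simp_all add: p_def R_def[symmetric])
  have slope: "sqrt 2 * \<beta> * x < h * sqrt (1 - x\<^sup>2) \<longleftrightarrow> x < p"
    "h * sqrt (1 - x\<^sup>2) < sqrt 2 * \<beta> * x \<longleftrightarrow> p < x" if "-1 < x" "x < 1" for x
    using Bfun_1_slope_comparison[OF assms(1,2) that] \<open>0 < R\<close>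
    by (simp_all add: p_def R_def[symmetric] pos_less_divide_eq pos_divide_less_eq)
  have "strict_mono_on {-1..p} (Bfun h \<beta> 1)"
    using \<open>p < 1\<close> slope(1) by (intro Bfun_strict_mono_on) auto
  moreover have "strict_antimono_on {p..1} (Bfun h \<beta> 1)"
    using \<open>0 < p\<close> slope(2) by (intro Bfun_strict_antimono_on) auto
  ultimately show local: "{x. local_maximizer (Bfun h \<beta> 1) x} = {p}"
    and global: "{x. global_maximizer (Bfun h \<beta> 1) x} = {p}"
    using maximizers_unimodal \<open>0 < p\<close> \<open>p < 1\<close> by auto
  have R2: "R\<^sup>2 = h\<^sup>2 + 2 * \<beta>\<^sup>2" by (simp add: R_def)
  have "1 - p\<^sup>2 = (R\<^sup>2 - h\<^sup>2) / R\<^sup>2"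
    using \<open>0 < R\<close> by (simp add: p_def R_def[symmetric] power_divide diff_divide_distrib)
  also have "\<dots> = (sqrt 2 * \<beta> / R)\<^sup>2" by (simp add: R2 power_divide power_mult_distrib)
  finally have "sqrt (1 - p\<^sup>2) = sqrt 2 * \<beta> / R"
    using \<open>0 < R\<close> assms(2) by simp
  then have "Bfun h \<beta> 1 p = h * (h / R) + sqrt 2 * \<beta> * (sqrt 2 * \<beta> / R)"
    by (simp add: Bfun_def p_def R_def[symmetric])
  also have "\<dots> = (h\<^sup>2 + 2 * \<beta>\<^sup>2) / R" by (simp add: add_divide_distrib power2_eq_square)
  also have "\<dots> = R\<^sup>2 / R" by (simp only: R2)
  also have "\<dots> = R" by (simp add: power2_eq_square)
  finally show "(SUP a\<in>{-1..1}. Bfun h \<beta> 1 a) = sqrt (h\<^sup>2 + 2 * \<beta>\<^sup>2)"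
    using SUP_eq_if_global_maximizer[of "Bfun h \<beta> 1" p] global by (auto simp: R_def)
qed

section \<open>The case k = 2\<close>

lemma phi_0: "phi 0 x = 1 - x\<^sup>2"
  by (simp add: phi_def)

lemma Bfun_2_level: "2 * (\<beta> / (h * 2))\<^sup>2 = \<beta>\<^sup>2 / (2 * h\<^sup>2 :: real)"
  by (simp add: power_divide power_mult_distrib)

lemma Bfun_2_maximizers_large_beta:
  assumes "h > 0" "\<beta> > 0" "beta_c 2 h \<le> \<beta>"
  shows "{x. local_maximizer (Bfun h \<beta> 2) x} = {0}"
    and "{x. global_maximizer (Bfun h \<beta> 2) x} = {0}"
proof -
  have "(sqrt 2 * h)\<^sup>2 \<le> \<beta>\<^sup>2"
    using assms by (intro power_mono) (auto simp: beta_c_def)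
  then have "1 \<le> \<beta>\<^sup>2 / (2 * h\<^sup>2)" using assms(1) by (simp add: power_mult_distrib)
  then have "1 - x\<^sup>2 < \<beta>\<^sup>2 / (2 * h\<^sup>2)" if "0 < x" for x :: real
    using that by (smt (verit) zero_less_power)
  then have dec: "strict_antimono_on {0..1} (Bfun h \<beta> 2)"
    using assms(1,2) by (intro Bfun_strict_antimono_on_if_phi) (auto simp: phi_0 Bfun_2_level)
  have "strict_mono_on {-1..0} (Bfun h \<beta> 2)"
    using strict_mono_on_reflect[OF _ dec] by (simp add: Bfun_even)
  from maximizers_unimodal[OF this dec]
  show "{x. local_maximizer (Bfun h \<beta> 2) x} = {0}"
    and "{x. global_maximizer (Bfun h \<beta> 2) x} = {0}" by simp_all
qed

lemma Bfun_2_maximizers_small_beta: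
  assumes "h > 0" "\<beta> > 0" "\<beta> < beta_c 2 h"
  defines "s \<equiv> sqrt (1 - \<beta>\<^sup>2 / (2 * h\<^sup>2))"
  shows "{x. local_maximizer (Bfun h \<beta> 2) x} = {s, - s}"
    and "{x. global_maximizer (Bfun h \<beta> 2) x} = {s, - s}"
    and "(SUP a\<in>{-1..1}. Bfun h \<beta> 2 a) = h + \<beta>\<^sup>2 / (2 * h)"
proof -
  have "\<beta>\<^sup>2 < (sqrt 2 * h)\<^sup>2"
    using assms by (intro power_strict_mono) (auto simp: beta_c_def)
  then have "\<beta>\<^sup>2 / (2 * h\<^sup>2) < 1" using assms(1) by (simp add: power_mult_distrib)
  moreover have "0 < \<beta>\<^sup>2 / (2 * h\<^sup>2)" using assms(1,2) by simp
  ultimately have "0 < s" "s < 1" and s2: "s\<^sup>2 = 1 - \<beta>\<^sup>2 / (2 * h\<^sup>2)" by (simp_all add: s_def)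
  have level_iff: "\<beta>\<^sup>2 / (2 * h\<^sup>2) < 1 - x\<^sup>2 \<longleftrightarrow> x < s" "1 - x\<^sup>2 < \<beta>\<^sup>2 / (2 * h\<^sup>2) \<longleftrightarrow> s < x"
    if "0 < x" for x
    using less_iff_power2_less[of x s] less_iff_power2_less[of s x] that \<open>0 < s\<close> s2 by auto
  have "strict_mono_on {0..s} (Bfun h \<beta> 2)"
    using assms(1,2) \<open>s < 1\<close> by (intro Bfun_strict_mono_on_if_phi) (auto simp: phi_0 Bfun_2_level level_iff)
  moreover have "strict_antimono_on {s..1} (Bfun h \<beta> 2)"
    using assms(1,2) \<open>0 < s\<close> by (intro Bfun_strict_antimono_on_if_phi) (auto simp: phi_0 Bfun_2_level level_iff)
  ultimately show "{x. local_maximizer (Bfun h \<beta> 2) x} = {s, - s}"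
    and global: "{x. global_maximizer (Bfun h \<beta> 2) x} = {s, - s}"
    using maximizers_even_bimodal[of "Bfun h \<beta> 2" s] \<open>0 < s\<close> \<open>s < 1\<close> by (auto simp: Bfun_even)
  have "sqrt (1 - s\<^sup>2) = \<beta> / (sqrt 2 * h)"
    using assms(1,2) by (simp add: s2 power_divide power_mult_distrib real_sqrt_divide real_sqrt_mult)
  then have "Bfun h \<beta> 2 s = h * (1 - \<beta>\<^sup>2 / (2 * h\<^sup>2)) + sqrt 2 * \<beta> * (\<beta> / (sqrt 2 * h))"
    by (simp add: Bfun_def s2)
  also have "\<dots> = h + \<beta>\<^sup>2 / (2 * h)"
    using assms(1) by (simp add: field_simps power2_eq_square)
  finally show "(SUP a\<in>{-1..1}. Bfun h \<beta> 2 a) = h + \<beta>\<^sup>2 / (2 * h)"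
    using SUP_eq_if_global_maximizer[of "Bfun h \<beta> 2" s] global by auto
qed

section \<open>Shape of phi\<close>

lemma continuous_on_phi: "continuous_on A (phi n)"
  unfolding phi_def[abs_def] by (intro continuous_intros)

definition phi_argmax :: "nat \<Rightarrow> real" where
  "phi_argmax n = sqrt (real n / (real n + 1))"

lemma phi_argmax_bounds: "1 \<le> n \<Longrightarrow> 0 < phi_argmax n \<and> phi_argmax n < 1"
  by (simp add: phi_argmax_def)

lemma phi_has_real_derivative:
  assumes "1 \<le> n"
  shows "(phi n has_real_derivative 2 * x ^ (2 * n - 1) * (real n - (real n + 1) * x\<^sup>2)) (at x)"
proof -
  have "x ^ (2 * n) = x * x ^ (2 * n - 1)"
    using assms by (simp flip: power_Suc)
  moreover have "(phi n has_real_derivative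
      real (2 * n) * x ^ (2 * n - 1) * (1 - x\<^sup>2) + (- (2 * x)) * x ^ (2 * n)) (at x)"
    unfolding phi_def[abs_def] by (auto intro!: derivative_eq_intros)
  ultimately show ?thesis by (simp add: algebra_simps power2_eq_square)
qed

lemma phi_strict_mono_on:
  assumes "1 \<le> n"
  shows "strict_mono_on {0..phi_argmax n} (phi n)"
proof (rule strict_mono_on_if_deriv_pos[OF _ phi_has_real_derivative[OF assms]])
  fix x assume "0 < x" "x < phi_argmax n"
  then have "x\<^sup>2 < real n / (real n + 1)"
    using less_iff_power2_less[of x "phi_argmax n"] by (simp add: phi_argmax_def)
  then have "0 < real n - (real n + 1) * x\<^sup>2" by (simp add: field_simps)
  then show "0 < 2 * x ^ (2 * n - 1) * (real n - (real n + 1) * x\<^sup>2)"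
    using \<open>0 < x\<close> by simp
qed (rule continuous_on_phi)

lemma phi_strict_antimono_on:
  assumes "1 \<le> n"
  shows "strict_antimono_on {phi_argmax n..1} (phi n)"
proof (rule strict_antimono_on_if_deriv_neg[OF _ phi_has_real_derivative[OF assms]])
  fix x assume "phi_argmax n < x" "x < 1"
  moreover have "0 < phi_argmax n" using phi_argmax_bounds[OF assms] by simp
  ultimately have "0 < x" and "(phi_argmax n)\<^sup>2 < x\<^sup>2"
    using less_iff_power2_less[of "phi_argmax n" x] by auto
  then have "real n - (real n + 1) * x\<^sup>2 < 0" by (simp add: phi_argmax_def field_simps)
  then show "2 * x ^ (2 * n - 1) * (real n - (real n + 1) * x\<^sup>2) < 0"
    using \<open>0 < x\<close> by (simp add: mult_pos_neg)
qed (rule continuous_on_phi)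

lemma phi_at_0: "1 \<le> n \<Longrightarrow> phi n 0 = 0"
  by (simp add: phi_def)

lemma phi_at_1: "phi n 1 = 0"
  by (simp add: phi_def)

lemma phi_nonpos: "1 \<le> x \<Longrightarrow> phi n x \<le> 0"
  unfolding phi_def by (intro mult_nonneg_nonpos) (auto simp: one_le_power abs_le_square_iff)

lemma phi_pos: "0 < x \<Longrightarrow> x < 1 \<Longrightarrow> 0 < phi n x"
  by (simp add: phi_def power2_less_1_iff)

lemma phi_less_at_argmax:
  assumes "1 \<le> n" "x \<in> {0..1}" "x \<noteq> phi_argmax n"
  shows "phi n x < phi n (phi_argmax n)"
  using assms phi_argmax_bounds[OF assms(1)]
    strict_mono_on_less[OF phi_strict_mono_on[OF assms(1)], of x "phi_argmax n"]
    strict_antimono_on_less[OF phi_strict_antimono_on[OF assms(1)], of x "phi_argmax n"]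
  by (cases x "phi_argmax n" rule: linorder_cases) auto

lemma phi_level_points:
  assumes "1 \<le> n" "0 < c" "c < phi n (phi_argmax n)"
  obtains a q where "0 < a" "a < phi_argmax n" "phi_argmax n < q" "q < 1"
    "phi n a = c" "phi n q = c"
proof -
  note m = phi_argmax_bounds[OF assms(1)]
  obtain a where "0 \<le> a" "a \<le> phi_argmax n" "phi n a = c"
    using IVT'[of "phi n" 0 c "phi_argmax n"] assms continuous_on_phi m by (auto simp: phi_at_0)
  moreover obtain q where "phi_argmax n \<le> q" "q \<le> 1" "phi n q = c"
    using IVT2'[of "phi n" 1 c "phi_argmax n"] assms continuous_on_phi m by (auto simp: phi_at_1)
  ultimately show ?thesis
    using that assms by (force simp: order_le_less phi_at_0 phi_at_1)
qed

lemma phi_level_sign: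
  assumes "1 \<le> n" "0 < a" "a < phi_argmax n" "phi_argmax n < q" "q < 1"
    and "phi n a = c" "phi n q = c" "x \<in> {0..1}"
  shows "c < phi n x \<longleftrightarrow> a < x \<and> x < q"
    and "phi n x < c \<longleftrightarrow> x < a \<or> q < x"
    and "phi n x = c \<longleftrightarrow> x = a \<or> x = q"
proof -
  note inc = strict_mono_on_less[OF phi_strict_mono_on[OF assms(1)]]
  note dec = strict_antimono_on_less[OF phi_strict_antimono_on[OF assms(1)]]
  have "(c < phi n x \<longleftrightarrow> a < x \<and> x < q) \<and> (phi n x < c \<longleftrightarrow> x < a \<or> q < x)"
  proof (cases "x \<le> phi_argmax n")
    case True
    then show ?thesis
      using inc[of a x] inc[of x a] assms by auto
  next
    case False
    then show ?thesis
      using dec[of q x] dec[of x q] assms by auto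
  qed
  then show "c < phi n x \<longleftrightarrow> a < x \<and> x < q" "phi n x < c \<longleftrightarrow> x < a \<or> q < x"
    "phi n x = c \<longleftrightarrow> x = a \<or> x = q"
    using assms(2-5) by (auto simp: not_less_iff_gr_or_eq[symmetric])
qed

lemma phi_level_largest:
  assumes "1 \<le> n" "0 < a" "a < phi_argmax n" "phi_argmax n < q" "q < 1"
    and "phi n a = c" "phi n q = c" "phi n x = c"
  shows "x \<le> q"
    and "phi_argmax n < x \<Longrightarrow> x = q"
proof -
  have "0 < c" using assms(2,3,6) phi_argmax_bounds[OF assms(1)] phi_pos[of a n] by simp
  then have "x < 1" using assms(8) phi_nonpos[of x n] by (cases "x < 1") auto
  then have "x < 0 \<or> x = a \<or> x = q"
    using phi_level_sign(3)[OF assms(1-7), of x] assms(8) by (cases "0 \<le> x") auto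
  then show "x \<le> q" "phi_argmax n < x \<Longrightarrow> x = q"
    using assms(2-5) by auto
qed

section \<open>Critical values of beta\<close>

(* The value of beta for which a is a critical point of Bfun h beta k. *)
definition critical_beta :: "real \<Rightarrow> nat \<Rightarrow> real \<Rightarrow> real" where
  "critical_beta h k a = h * real k / sqrt 2 * (a ^ (k - 2) * sqrt (1 - a\<^sup>2))"

lemma critical_beta_eq_sqrt_phi:
  assumes "0 \<le> a"
  shows "critical_beta h k a = h * real k / sqrt 2 * sqrt (phi (k - 2) a)"
  using assms by (simp add: critical_beta_def phi_def real_sqrt_mult power_mult real_sqrt_power)

lemma beta_tilde_c_eq_critical_beta:
  assumes "3 \<le> k"
  shows "beta_tilde_c k h = critical_beta h k (phi_argmax (k - 2))"
proof -
  define n where "n = k - 2"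
  have n: "real k - 2 = real n" "real k - 1 = real n + 1" "1 \<le> n" using assms by (auto simp: n_def)
  have "real n powr (real n / 2) = sqrt (real n ^ n)"
    using n(3) by (simp add: powr_half_sqrt_powr powr_realpow)
  moreover have "(real n + 1) powr ((real n + 1) / 2) = sqrt ((real n + 1) ^ (n + 1))"
    using powr_half_sqrt_powr[of "real n + 1" "real n + 1"] powr_realpow[of "real n + 1" "n + 1"]
    by (simp add: add.commute)
  moreover have "phi_argmax n ^ n * sqrt (1 - (phi_argmax n)\<^sup>2)
      = sqrt (real n ^ n) / sqrt ((real n + 1) ^ (n + 1))"
    by (simp add: phi_argmax_def real_sqrt_power[symmetric] power_divide field_simps real_sqrt_divide
        real_sqrt_mult[symmetric])
  ultimately show ?thesis
    by (simp add: beta_tilde_c_def critical_beta_def n n_def[symmetric])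
qed

(* At a critical point a, B a = B 0 exactly when (k - 1) * sqrt (1 - a^2) = 1. *)
definition alpha_c :: "nat \<Rightarrow> real" where
  "alpha_c k = sqrt (1 - 1 / (real k - 1)\<^sup>2)"

lemma alpha_c_bounds:
  assumes "3 \<le> k"
  shows "phi_argmax (k - 2) < alpha_c k" "alpha_c k < 1"
    and "sqrt (1 - (alpha_c k)\<^sup>2) = 1 / (real k - 1)"
proof -
  have k: "real (k - 2) = real k - 2" "1 < real k - 1" using assms by auto
  then have "1 / (real k - 1)\<^sup>2 < 1 / (real k - 1)"
    by (intro divide_strict_left_mono) (simp_all add: power2_eq_square)
  moreover have "real (k - 2) / (real (k - 2) + 1) = 1 - 1 / (real k - 1)"
    using k by (simp add: field_simps)
  ultimately show "phi_argmax (k - 2) < alpha_c k"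
    by (simp add: phi_argmax_def alpha_c_def)
  show "alpha_c k < 1" using k by (simp add: alpha_c_def)
  have "1 / (real k - 1)\<^sup>2 \<le> 1" using k by (simp add: power_le_one_iff)
  then show "sqrt (1 - (alpha_c k)\<^sup>2) = 1 / (real k - 1)"
    using k by (simp add: alpha_c_def real_sqrt_divide)
qed

lemma alpha_c_less_iff:
  assumes "3 \<le> k" "0 < a" "a < 1"
  shows "(real k - 1) * sqrt (1 - a\<^sup>2) < 1 \<longleftrightarrow> alpha_c k < a"
    and "(real k - 1) * sqrt (1 - a\<^sup>2) = 1 \<longleftrightarrow> a = alpha_c k"
proof -
  note ac = alpha_c_bounds[OF assms(1)]
  have "1 \<le> k - 2" using assms(1) by simp
  then have "0 < alpha_c k" using ac(1) phi_argmax_bounds[of "k - 2"] by simp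
  then have "sqrt (1 - a\<^sup>2) < sqrt (1 - (alpha_c k)\<^sup>2) \<longleftrightarrow> alpha_c k < a"
    "sqrt (1 - a\<^sup>2) = sqrt (1 - (alpha_c k)\<^sup>2) \<longleftrightarrow> a = alpha_c k"
    using assms(2,3) less_iff_power2_less[of "alpha_c k" a] ac(2)
    by (auto simp: power2_less_1_iff abs_square_less_1 power2_eq_iff_nonneg)
  moreover have "1 < real k - 1" using assms(1) by simp
  ultimately show "(real k - 1) * sqrt (1 - a\<^sup>2) < 1 \<longleftrightarrow> alpha_c k < a"
    "(real k - 1) * sqrt (1 - a\<^sup>2) = 1 \<longleftrightarrow> a = alpha_c k"
    by (auto simp: ac(3) field_simps)
qed

lemma beta_c_eq_critical_beta:
  assumes "3 \<le> k"
  shows "beta_c k h = critical_beta h k (alpha_c k)"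
proof -
  define n where "n = k - 2"
  define q where "q = 1 - 1 / (real n + 1)\<^sup>2"
  have n: "real k - 2 = real n" "real k - 1 = real n + 1" "real k = real n + 2" "k = n + 2" "1 \<le> n"
    using assms by (auto simp: n_def)
  have "q = ((real n + 1)\<^sup>2 - 1) / (real n + 1)\<^sup>2"
    by (simp add: q_def diff_divide_distrib)
  also have "(real n + 1)\<^sup>2 - 1 = real n * (real n + 2)"
    by (simp add: power2_eq_square algebra_simps)
  finally have q: "q = real n * (real n + 2) / (real n + 1)\<^sup>2" .
  then have "0 < q" using n(5) by simp
  have "q powr (real k / 2) = sqrt (q ^ k)"
    using \<open>0 < q\<close> by (simp add: powr_half_sqrt_powr powr_realpow)
  also have "\<dots> = sqrt q ^ n * q"
    using \<open>0 < q\<close> by (simp add: n(4) power_add real_sqrt_mult real_sqrt_power)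
  finally have q_powr: "q powr (real k / 2) = sqrt q ^ n * q" .
  have "(real n + 1) / real n * q
      = (real n * (real n + 1)) * (real n + 2) / ((real n * (real n + 1)) * (real n + 1))"
    by (simp add: q power2_eq_square mult_ac)
  then have q_factor: "(real n + 1) / real n * q = (real n + 2) / (real n + 1)"
    using n(5) by simp
  have sqrt_q: "sqrt (1 - (sqrt q)\<^sup>2) = 1 / (real n + 1)"
    using \<open>0 < q\<close> by (simp add: q_def real_sqrt_divide)
  have "beta_c k h = h / sqrt 2 * ((real n + 1) / real n) * q powr (real k / 2)"
    using assms by (simp add: beta_c_def n(1,2) q_def)
  also have "\<dots> = h / sqrt 2 * ((real n + 1) / real n * q) * sqrt q ^ n"
    by (simp only: q_powr mult_ac)
  also have "\<dots> = h * real k / sqrt 2 * (sqrt q ^ n * (1 / (real n + 1)))"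
    unfolding q_factor by (simp add: n(3))
  also have "\<dots> = critical_beta h k (sqrt q)"
    by (simp add: critical_beta_def sqrt_q n_def)
  finally show ?thesis by (simp add: q_def n(2) alpha_c_def)
qed

lemma critical_beta_nonneg: "0 \<le> h \<Longrightarrow> 0 \<le> a \<Longrightarrow> a \<le> 1 \<Longrightarrow> 0 \<le> critical_beta h k a"
  by (simp add: critical_beta_def abs_square_le_1)

lemma critical_beta_level:
  assumes "h > 0" "0 < k" "0 \<le> a" "a \<le> 1"
  shows "2 * (critical_beta h k a / (h * real k))\<^sup>2 = phi (k - 2) a"
proof -
  have "0 \<le> phi (k - 2) a" using assms(3,4) by (simp add: phi_def abs_square_le_1)
  then show ?thesis
    using assms(1,2) by (simp add: critical_beta_eq_sqrt_phi[OF assms(3)] power_mult_distrib power_divide)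
qed

lemma level_less_iff:
  fixes h \<beta> \<beta>' :: real
  assumes "h > 0" "0 < k" "0 \<le> \<beta>" "0 \<le> \<beta>'"
  shows "2 * (\<beta> / (h * real k))\<^sup>2 < 2 * (\<beta>' / (h * real k))\<^sup>2 \<longleftrightarrow> \<beta> < \<beta>'"
  using assms less_iff_power2_less[of \<beta> \<beta>'] by (simp add: power_divide divide_less_cancel)

lemma critical_beta_less_iff:
  assumes "h > 0" "3 \<le> k"
    and "a \<in> {phi_argmax (k - 2)..1}" "b \<in> {phi_argmax (k - 2)..1}"
  shows "critical_beta h k a < critical_beta h k b \<longleftrightarrow> b < a"
proof -
  have "0 < phi_argmax (k - 2)" using phi_argmax_bounds assms(2) by simp
  then have "0 \<le> a" "0 \<le> b" using assms(3,4) by auto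
  moreover have "phi (k - 2) a < phi (k - 2) b \<longleftrightarrow> b < a"
    using strict_antimono_on_less[OF phi_strict_antimono_on] assms by auto
  moreover have "0 < h * real k / sqrt 2" using assms(1,2) by simp
  ultimately show ?thesis
    unfolding critical_beta_eq_sqrt_phi[OF \<open>0 \<le> a\<close>] critical_beta_eq_sqrt_phi[OF \<open>0 \<le> b\<close>]
    by (simp only: mult_less_cancel_left_pos real_sqrt_less_iff)
qed

lemma Bfun_critical_minus_Bfun_0:
  fixes h a :: real
  assumes "2 \<le> k" "a\<^sup>2 \<le> 1"
  defines "\<beta> \<equiv> critical_beta h k a" and "s \<equiv> sqrt (1 - a\<^sup>2)"
  shows "Bfun h \<beta> k a - Bfun h \<beta> k 0 = h * a ^ (k - 2) * (1 - s) * (1 - (real k - 1) * s)"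
proof -
  have "a ^ k = a ^ (k - 2 + 2)" by (simp only: le_add_diff_inverse2[OF assms(1)])
  also have "\<dots> = a ^ (k - 2) * a\<^sup>2" by (rule power_add)
  finally have "a ^ k = a ^ (k - 2) * a\<^sup>2" .
  then have "a ^ k = a ^ (k - 2) * (1 - s\<^sup>2)"
    using assms(2) by (simp add: s_def)
  moreover have "sqrt 2 * \<beta> = h * real k * a ^ (k - 2) * s"
    by (simp add: \<beta>_def s_def critical_beta_def)
  ultimately have "Bfun h \<beta> k a - Bfun h \<beta> k 0
      = h * a ^ (k - 2) * (1 - s\<^sup>2) + h * real k * a ^ (k - 2) * s * s - h * real k * a ^ (k - 2) * s"
    using assms(1) by (simp add: Bfun_def s_def[symmetric] mult.assoc[symmetric])
  then show ?thesis by (simp add: algebra_simps power2_eq_square)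
qed

lemma Bfun_0_vs_critical_point:
  fixes h a :: real
  assumes "h > 0" "3 \<le> k" "phi_argmax (k - 2) < a" "a < 1"
  defines "\<beta> \<equiv> critical_beta h k a"
  shows "Bfun h \<beta> k 0 < Bfun h \<beta> k a \<longleftrightarrow> \<beta> < beta_c k h"
    and "Bfun h \<beta> k 0 = Bfun h \<beta> k a \<longleftrightarrow> \<beta> = beta_c k h"
proof -
  define s where "s = sqrt (1 - a\<^sup>2)"
  have "1 \<le> k - 2" using assms(2) by simp
  then have "0 < a" using assms(3) phi_argmax_bounds[of "k - 2"] by simp
  then have "0 < s" "s < 1" using assms(4) by (simp_all add: s_def power2_less_1_iff)
  define P where "P = h * a ^ (k - 2) * (1 - s)"
  have "0 < P" using assms(1) \<open>0 < a\<close> \<open>s < 1\<close> by (simp add: P_def)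
  have "Bfun h \<beta> k a - Bfun h \<beta> k 0 = P * (1 - (real k - 1) * s)"
    using Bfun_critical_minus_Bfun_0[of k a h] assms(2,4) \<open>0 < a\<close>
    by (simp add: \<beta>_def s_def P_def abs_square_le_1)
  moreover have "0 < P * d \<longleftrightarrow> 0 < d" "P * d = 0 \<longleftrightarrow> d = 0" for d
    using \<open>0 < P\<close> by (simp_all add: zero_less_mult_iff)
  ultimately have "Bfun h \<beta> k 0 < Bfun h \<beta> k a \<longleftrightarrow> (real k - 1) * s < 1"
    "Bfun h \<beta> k 0 = Bfun h \<beta> k a \<longleftrightarrow> (real k - 1) * s = 1"
    by (metis diff_gt_0_iff_gt, metis eq_iff_diff_eq_0)
  then have "Bfun h \<beta> k 0 < Bfun h \<beta> k a \<longleftrightarrow> alpha_c k < a"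
    "Bfun h \<beta> k 0 = Bfun h \<beta> k a \<longleftrightarrow> a = alpha_c k"
    using alpha_c_less_iff[OF assms(2) \<open>0 < a\<close> assms(4)] by (simp_all add: s_def)
  moreover have "\<beta> < beta_c k h \<longleftrightarrow> alpha_c k < a" "\<beta> = beta_c k h \<longleftrightarrow> a = alpha_c k"
  proof -
    have "a \<in> {phi_argmax (k - 2)..1}" "alpha_c k \<in> {phi_argmax (k - 2)..1}"
      using alpha_c_bounds[OF assms(2)] assms(3,4) by auto
    note less_iff = critical_beta_less_iff[OF assms(1,2) this] critical_beta_less_iff[OF assms(1,2) this(2,1)]
    then show "\<beta> < beta_c k h \<longleftrightarrow> alpha_c k < a" "\<beta> = beta_c k h \<longleftrightarrow> a = alpha_c k"
      unfolding \<beta>_def beta_c_eq_critical_beta[OF assms(2)] by (metis not_less_iff_gr_or_eq)+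
  qed
  ultimately show "Bfun h \<beta> k 0 < Bfun h \<beta> k a \<longleftrightarrow> \<beta> < beta_c k h"
    "Bfun h \<beta> k 0 = Bfun h \<beta> k a \<longleftrightarrow> \<beta> = beta_c k h" by simp_all
qed

section \<open>The case k >= 3\<close>

lemma phi_argmax_eq: "3 \<le> k \<Longrightarrow> phi_argmax (k - 2) = sqrt ((real k - 2) / (real k - 1))"
  by (simp add: phi_argmax_def of_nat_diff algebra_simps)

lemma critical_beta_eq_if_level:
  fixes h \<beta> a :: real
  assumes "h > 0" "0 < k" "0 \<le> \<beta>" "0 \<le> a" "a \<le> 1"
    and "phi (k - 2) a = 2 * (\<beta> / (h * real k))\<^sup>2"
  shows "\<beta> = critical_beta h k a"
proof -
  have "0 \<le> critical_beta h k a"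
    using assms(1,4,5) by (simp add: critical_beta_nonneg)
  then show ?thesis
    using level_less_iff[OF assms(1-3), of "critical_beta h k a"]
      level_less_iff[OF assms(1,2) _ assms(3), of "critical_beta h k a"]
      critical_beta_level[OF assms(1,2,4,5)] assms(6)
    by (metis linorder_neq_iff order_less_irrefl)
qed

lemma level_less_phi_argmax_iff:
  fixes h \<beta> :: real
  assumes "h > 0" "0 \<le> \<beta>" "3 \<le> k"
  shows "2 * (\<beta> / (h * real k))\<^sup>2 < phi (k - 2) (phi_argmax (k - 2)) \<longleftrightarrow> \<beta> < beta_tilde_c k h"
proof -
  have "0 < phi_argmax (k - 2)" "phi_argmax (k - 2) < 1"
    using phi_argmax_bounds[of "k - 2"] assms(3) by simp_all
  then have "phi (k - 2) (phi_argmax (k - 2)) = 2 * (beta_tilde_c k h / (h * real k))\<^sup>2"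
    and "0 \<le> beta_tilde_c k h"
    using critical_beta_level[OF assms(1), of k "phi_argmax (k - 2)"] assms
    by (simp_all add: beta_tilde_c_eq_critical_beta critical_beta_nonneg)
  then show ?thesis
    using level_less_iff[OF assms(1) _ assms(2)] assms(3) by simp
qed

lemma Bfun_strict_mono_on_reflected:
  assumes "h > 0" "\<beta> > 0" "strict_antimono_on {0..a} (Bfun h \<beta> k)" "a \<le> 1"
  shows "strict_mono_on {-a..0} (Bfun h \<beta> k)"
proof (cases "even k")
  case True
  then show ?thesis using strict_mono_on_reflect[OF _ assms(3)] by (simp add: Bfun_even)
next
  case False
  show ?thesis
    by (rule monotone_on_subset[OF Bfun_odd_strict_mono_on_nonpos[OF False assms(1,2)]]) (use assms(4) in auto)
qed

lemma Bfun_maximizers_large_beta: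
  fixes h \<beta> :: real
  assumes "h > 0" "\<beta> > 0" "3 \<le> k" "beta_tilde_c k h \<le> \<beta>"
  shows "{x. local_maximizer (Bfun h \<beta> k) x} = {0}"
    and "{x. global_maximizer (Bfun h \<beta> k) x} = {0}"
proof -
  define m where "m = phi_argmax (k - 2)"
  have "1 \<le> k - 2" using assms(3) by simp
  then have "0 < m" "m < 1" using phi_argmax_bounds by (simp_all add: m_def)
  have "phi (k - 2) x < 2 * (\<beta> / (h * real k))\<^sup>2" if "0 < x" "x < 1" "x \<noteq> m" for x
    using phi_less_at_argmax[OF \<open>1 \<le> k - 2\<close>, of x] level_less_phi_argmax_iff[OF assms(1) _ assms(3), of \<beta>]
      that assms(2,4) by (simp add: m_def not_less)
  then have "strict_antimono_on {0..m} (Bfun h \<beta> k)" "strict_antimono_on {m..1} (Bfun h \<beta> k)"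
    using assms(1-3) \<open>0 < m\<close> \<open>m < 1\<close> by (auto intro!: Bfun_strict_antimono_on_if_phi)
  then have dec: "strict_antimono_on {0..1} (Bfun h \<beta> k)"
    by (rule strict_antimono_on_atLeastAtMost_join)
  have "strict_mono_on {-1..0} (Bfun h \<beta> k)"
    using Bfun_strict_mono_on_reflected[OF assms(1,2) dec] by simp
  from maximizers_unimodal[OF this dec]
  show "{x. local_maximizer (Bfun h \<beta> k) x} = {0}"
    and "{x. global_maximizer (Bfun h \<beta> k) x} = {0}" by simp_all
qed

lemma Bfun_small_beta_shape:
  fixes h \<beta> :: real
  assumes "h > 0" "\<beta> > 0" "3 \<le> k" "\<beta> < beta_tilde_c k h"
  obtains a q where "0 < a" "a < phi_argmax (k - 2)" "phi_argmax (k - 2) < q" "q < 1"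
    and "phi (k - 2) a = 2 * (\<beta> / (h * real k))\<^sup>2" "phi (k - 2) q = 2 * (\<beta> / (h * real k))\<^sup>2"
    and "strict_antimono_on {0..a} (Bfun h \<beta> k)" "strict_mono_on {a..q} (Bfun h \<beta> k)"
    and "strict_antimono_on {q..1} (Bfun h \<beta> k)"
proof -
  define c where "c = 2 * (\<beta> / (h * real k))\<^sup>2"
  have "1 \<le> k - 2" using assms(3) by simp
  have "0 < c" using assms(1-3) by (simp add: c_def)
  moreover have "c < phi (k - 2) (phi_argmax (k - 2))"
    using level_less_phi_argmax_iff[OF assms(1) _ assms(3)] assms(2,4) by (simp add: c_def)
  ultimately obtain a q where aq: "0 < a" "a < phi_argmax (k - 2)" "phi_argmax (k - 2) < q" "q < 1"
    "phi (k - 2) a = c" "phi (k - 2) q = c"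
    using phi_level_points[OF \<open>1 \<le> k - 2\<close>] by blast
  note sign = phi_level_sign[OF \<open>1 \<le> k - 2\<close> aq]
  have "strict_antimono_on {0..a} (Bfun h \<beta> k)"
    using assms(1-3) aq sign(2) by (intro Bfun_strict_antimono_on_if_phi) (auto simp: c_def)
  moreover have "strict_mono_on {a..q} (Bfun h \<beta> k)"
    using assms(1-3) aq sign(1) by (intro Bfun_strict_mono_on_if_phi) (auto simp: c_def)
  moreover have "strict_antimono_on {q..1} (Bfun h \<beta> k)"
    using assms(1-3) aq sign(2) by (intro Bfun_strict_antimono_on_if_phi) (auto simp: c_def)
  ultimately show ?thesis using that aq by (simp add: c_def)
qed

lemma Bfun_odd_no_negative_local_maximizer:
  assumes "odd k" "h > 0" "\<beta> > 0"
  shows "{x\<in>{-1..<0}. local_maximizer (Bfun h \<beta> k) x} = {}"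
  using not_local_maximizer_if_strict_mono_on[OF Bfun_odd_strict_mono_on_nonpos[OF assms]] by auto

lemma Bfun_le_if_le_on_nonneg:
  assumes "h > 0" "\<beta> > 0" "\<forall>x\<in>{0..1}. Bfun h \<beta> k x \<le> M"
  shows "\<forall>x\<in>{-1..1}. Bfun h \<beta> k x \<le> M"
proof
  fix x :: real assume x: "x \<in> {-1..1}"
  show "Bfun h \<beta> k x \<le> M"
  proof (cases "0 \<le> x")
    case False
    show ?thesis
    proof (cases "even k")
      case True
      moreover have "- x \<in> {0..1}" using x False by simp
      ultimately show ?thesis using assms(3) Bfun_even[of k h \<beta> x] by fastforce
    next
      case odd: False
      then have "Bfun h \<beta> k x \<le> Bfun h \<beta> k 0"
        using le_right_end_if_strict_mono_on[OF Bfun_odd_strict_mono_on_nonpos[OF odd assms(1,2)]] x False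
        by simp
      moreover have "Bfun h \<beta> k 0 \<le> M" using assms(3) by simp
      ultimately show ?thesis by linarith
    qed
  qed (use assms(3) x in auto)
qed

lemma Bfun_small_beta_maximizers_nonneg:
  fixes h \<beta> a q :: real
  assumes "h > 0" "\<beta> > 0" "3 \<le> k" "0 < a" "a < q" "phi_argmax (k - 2) < q" "q < 1"
    and "phi (k - 2) q = 2 * (\<beta> / (h * real k))\<^sup>2"
    and dec0: "strict_antimono_on {0..a} (Bfun h \<beta> k)" and inc: "strict_mono_on {a..q} (Bfun h \<beta> k)"
    and dec: "strict_antimono_on {q..1} (Bfun h \<beta> k)"
  defines "B \<equiv> Bfun h \<beta> k"
  shows "{x\<in>{0..1}. local_maximizer B x} = {0, q}"
    and "beta_c k h < \<beta> \<Longrightarrow> {x\<in>{0..1}. global_maximizer B x} = {0}"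
    and "\<beta> = beta_c k h \<Longrightarrow> {x\<in>{0..1}. global_maximizer B x} = {0, q}"
    and "\<beta> < beta_c k h \<Longrightarrow> {x\<in>{0..1}. global_maximizer B x} = {q}"
proof -
  have "a \<le> 1" using assms(5,7) by simp
  note nonneg_part = local_maximizers_on_unit_interval[OF
      Bfun_strict_mono_on_reflected[OF assms(1,2) dec0 \<open>a \<le> 1\<close>] dec0 inc dec assms(4,5,7), folded B_def]
  then show "{x\<in>{0..1}. local_maximizer B x} = {0, q}" by simp
  have "\<forall>x\<in>{-1..1}. B x \<le> max (B 0) (B q)"
    using Bfun_le_if_le_on_nonneg[OF assms(1,2) nonneg_part(2)[unfolded B_def]] unfolding B_def .
  moreover have "0 \<in> {-1..1::real}" "q \<in> {-1..1}" using assms(4,5,7) by auto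
  ultimately have global: "{x\<in>{0..1}. global_maximizer B x} = {x\<in>{0, q}. max (B 0) (B q) \<le> B x}"
    by (rule global_maximizers_two_candidates[OF _ _ _ nonneg_part(1)])
  have "\<beta> = critical_beta h k q"
    using critical_beta_eq_if_level[OF assms(1) _ _ _ _ assms(8)] assms(2-7) by simp
  then have compare: "B 0 < B q \<longleftrightarrow> \<beta> < beta_c k h" "B 0 = B q \<longleftrightarrow> \<beta> = beta_c k h"
    using Bfun_0_vs_critical_point[OF assms(1,3,6,7)] unfolding B_def by simp_all
  show "{x\<in>{0..1}. global_maximizer B x} = {0}" if "beta_c k h < \<beta>"
  proof -
    have "B q < B 0" using compare that by (metis not_less_iff_gr_or_eq)
    then show ?thesis unfolding global by (auto simp: max_def)
  qed
  show "{x\<in>{0..1}. global_maximizer B x} = {0, q}" if "\<beta> = beta_c k h"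
    using compare that unfolding global by auto
  show "{x\<in>{0..1}. global_maximizer B x} = {q}" if "\<beta> < beta_c k h"
  proof -
    have "B 0 < B q" using compare that by simp
    then show ?thesis unfolding global by (auto simp: max_def)
  qed
qed

lemma Bfun_maximizers_small_beta:
  fixes h \<beta> :: real
  assumes hpos: "h > 0" and bpos: "\<beta> > 0" and k: "3 \<le> k" and small: "\<beta> < beta_tilde_c k h"
  defines "B \<equiv> Bfun h \<beta> k"
  shows "\<exists>ah.
          ah ^ (2 * (k - 2)) * (1 - ah\<^sup>2) = 2 * (\<beta> / (h * real k))\<^sup>2
        \<and> (\<forall>x. x ^ (2 * (k - 2)) * (1 - x\<^sup>2) = 2 * (\<beta> / (h * real k))\<^sup>2 \<longrightarrow> x \<le> ah)
        \<and> sqrt ((real k - 2) / (real k - 1)) < ah \<and> ah < 1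
        \<and> (\<forall>x. sqrt ((real k - 2) / (real k - 1)) < x \<and> x < 1
               \<and> x ^ (2 * (k - 2)) * (1 - x\<^sup>2) = 2 * (\<beta> / (h * real k))\<^sup>2 \<longrightarrow> x = ah)
        \<and> {x\<in>{0..1}. local_maximizer B x} = {0, ah}
        \<and> (\<beta> > beta_c k h \<longrightarrow> {x\<in>{0..1}. global_maximizer B x} = {0})
        \<and> (\<beta> = beta_c k h \<longrightarrow> {x\<in>{0..1}. global_maximizer B x} = {0, ah})
        \<and> (\<beta> < beta_c k h \<longrightarrow> {x\<in>{0..1}. global_maximizer B x} = {ah})
        \<and> (k \<ge> 4 \<and> even k \<longrightarrow>
             (local_maximizer B ah \<longrightarrow> local_maximizer B (- ah))
           \<and> (global_maximizer B ah \<longrightarrow> global_maximizer B (- ah))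
           \<and> {x\<in>{-1..<0}. local_maximizer B x} = {- ah}
           \<and> (global_maximizer B ah \<longrightarrow> {x\<in>{-1..<0}. global_maximizer B x} = {- ah}))"
proof -
  have "1 \<le> k - 2" using k by simp
  obtain a q where aq: "0 < a" "a < phi_argmax (k - 2)" "phi_argmax (k - 2) < q" "q < 1"
      "phi (k - 2) a = 2 * (\<beta> / (h * real k))\<^sup>2" "phi (k - 2) q = 2 * (\<beta> / (h * real k))\<^sup>2"
    and shape: "strict_antimono_on {0..a} B" "strict_mono_on {a..q} B" "strict_antimono_on {q..1} B"
    using Bfun_small_beta_shape[OF hpos bpos k small] unfolding B_def by blast
  then have "a < q" by simp
  note nonneg_part = Bfun_small_beta_maximizers_nonneg[OF hpos bpos k aq(1) \<open>a < q\<close> aq(3,4,6)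
      shape[unfolded B_def], folded B_def]
  note largest = phi_level_largest[OF \<open>1 \<le> k - 2\<close> aq(1-6)]
  note phi_eq = phi_def[symmetric] and argmax_eq = phi_argmax_eq[OF k, symmetric]
  show ?thesis
  proof (intro exI[of _ q] conjI allI impI)
    show "q ^ (2 * (k - 2)) * (1 - q\<^sup>2) = 2 * (\<beta> / (h * real k))\<^sup>2"
      using aq(6) by (simp add: phi_eq)
    show "x \<le> q" if "x ^ (2 * (k - 2)) * (1 - x\<^sup>2) = 2 * (\<beta> / (h * real k))\<^sup>2" for x
      using largest(1) that by (simp add: phi_eq)
    show "sqrt ((real k - 2) / (real k - 1)) < q" "q < 1"
      using aq(3,4) by (simp_all add: argmax_eq)
    show "x = q" if "sqrt ((real k - 2) / (real k - 1)) < x \<and> x < 1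
        \<and> x ^ (2 * (k - 2)) * (1 - x\<^sup>2) = 2 * (\<beta> / (h * real k))\<^sup>2" for x
      using largest(2) that by (simp add: phi_eq argmax_eq)
    assume "4 \<le> k \<and> even k"
    then have sym: "B (- x) = B x" for x using Bfun_even by (simp add: B_def)
    show "local_maximizer B q \<Longrightarrow> local_maximizer B (- q)"
      by (rule local_maximizer_reflect[of B, OF sym])
    show "global_maximizer B q \<Longrightarrow> global_maximizer B (- q)"
      by (rule global_maximizer_reflect[of B, OF sym])
    show local_negative: "{x\<in>{-1..<0}. local_maximizer B x} = {- q}"
      using local_maximizers_negative_if_even[OF sym nonneg_part(1)] aq by simp
    show "global_maximizer B q \<Longrightarrow> {x\<in>{-1..<0}. global_maximizer B x} = {- q}"
      by (rule global_maximizers_negative_if_even[of B, OF sym local_negative])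
  qed (use nonneg_part in simp_all)
qed

theorem lemma5p1:
  fixes h \<beta> :: real and k :: nat
  assumes hpos: "h > 0" and bpos: "\<beta> > 0"
  defines "B \<equiv> Bfun h \<beta> k"
  shows
   "(k = 1 \<longrightarrow>
       (SUP a\<in>{-1..1}. B a) = sqrt (h\<^sup>2 + 2 * \<beta>\<^sup>2)
     \<and> {x. local_maximizer B x} = {h / sqrt (h\<^sup>2 + 2 * \<beta>\<^sup>2)}
     \<and> {x. global_maximizer B x} = {h / sqrt (h\<^sup>2 + 2 * \<beta>\<^sup>2)})
  \<and> (k = 2 \<longrightarrow> \<beta> \<ge> beta_c 2 h \<longrightarrow>
       {x. local_maximizer B x} = {0} \<and> {x. global_maximizer B x} = {0})
  \<and> (k = 2 \<longrightarrow> \<beta> < beta_c 2 h \<longrightarrow>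
       (SUP a\<in>{-1..1}. B a) = h + \<beta>\<^sup>2 / (2 * h)
     \<and> {x. local_maximizer B x} =
         {sqrt (1 - \<beta>\<^sup>2 / (2 * h\<^sup>2)), - sqrt (1 - \<beta>\<^sup>2 / (2 * h\<^sup>2))}
     \<and> {x. global_maximizer B x} =
         {sqrt (1 - \<beta>\<^sup>2 / (2 * h\<^sup>2)), - sqrt (1 - \<beta>\<^sup>2 / (2 * h\<^sup>2))})
  \<and> (k \<ge> 3 \<longrightarrow> \<beta> \<ge> beta_tilde_c k h \<longrightarrow>
       {x. local_maximizer B x} = {0} \<and> {x. global_maximizer B x} = {0})
  \<and> (k \<ge> 3 \<longrightarrow> \<beta> < beta_tilde_c k h \<longrightarrow>
       (\<exists>ah.
          ah ^ (2 * (k - 2)) * (1 - ah\<^sup>2) = 2 * (\<beta> / (h * real k))\<^sup>2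
        \<and> (\<forall>x. x ^ (2 * (k - 2)) * (1 - x\<^sup>2) = 2 * (\<beta> / (h * real k))\<^sup>2 \<longrightarrow> x \<le> ah)
        \<and> sqrt ((real k - 2) / (real k - 1)) < ah \<and> ah < 1
        \<and> (\<forall>x. sqrt ((real k - 2) / (real k - 1)) < x \<and> x < 1
               \<and> x ^ (2 * (k - 2)) * (1 - x\<^sup>2) = 2 * (\<beta> / (h * real k))\<^sup>2 \<longrightarrow> x = ah)
        \<and> {x\<in>{0..1}. local_maximizer B x} = {0, ah}
        \<and> (\<beta> > beta_c k h \<longrightarrow> {x\<in>{0..1}. global_maximizer B x} = {0})
        \<and> (\<beta> = beta_c k h \<longrightarrow> {x\<in>{0..1}. global_maximizer B x} = {0, ah})
        \<and> (\<beta> < beta_c k h \<longrightarrow> {x\<in>{0..1}. global_maximizer B x} = {ah})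
        \<and> (k \<ge> 4 \<and> even k \<longrightarrow>
             (local_maximizer B ah \<longrightarrow> local_maximizer B (- ah))
           \<and> (global_maximizer B ah \<longrightarrow> global_maximizer B (- ah))
           \<and> {x\<in>{-1..<0}. local_maximizer B x} = {- ah}
           \<and> (global_maximizer B ah \<longrightarrow> {x\<in>{-1..<0}. global_maximizer B x} = {- ah}))))
  \<and> (k \<ge> 3 \<and> odd k \<longrightarrow> {x\<in>{-1..<0}. local_maximizer B x} = {})"
proof (intro conjI impI)
  assume "k = 1"
  then show "(SUP a\<in>{-1..1}. B a) = sqrt (h\<^sup>2 + 2 * \<beta>\<^sup>2)"
    and "{x. local_maximizer B x} = {h / sqrt (h\<^sup>2 + 2 * \<beta>\<^sup>2)}"
    and "{x. global_maximizer B x} = {h / sqrt (h\<^sup>2 + 2 * \<beta>\<^sup>2)}"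
    using Bfun_1_maximizers[OF hpos bpos] by (simp_all add: B_def)
next
  assume "k = 2" "beta_c 2 h \<le> \<beta>"
  then show "{x. local_maximizer B x} = {0}" "{x. global_maximizer B x} = {0}"
    using Bfun_2_maximizers_large_beta[OF hpos bpos] by (simp_all add: B_def)
next
  assume "k = 2" "\<beta> < beta_c 2 h"
  then show "(SUP a\<in>{-1..1}. B a) = h + \<beta>\<^sup>2 / (2 * h)"
    and "{x. local_maximizer B x} = {sqrt (1 - \<beta>\<^sup>2 / (2 * h\<^sup>2)), - sqrt (1 - \<beta>\<^sup>2 / (2 * h\<^sup>2))}"
    and "{x. global_maximizer B x} = {sqrt (1 - \<beta>\<^sup>2 / (2 * h\<^sup>2)), - sqrt (1 - \<beta>\<^sup>2 / (2 * h\<^sup>2))}"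
    using Bfun_2_maximizers_small_beta[OF hpos bpos] by (simp_all add: B_def)
next
  assume "3 \<le> k" "beta_tilde_c k h \<le> \<beta>"
  then show "{x. local_maximizer B x} = {0}" "{x. global_maximizer B x} = {0}"
    using Bfun_maximizers_large_beta[OF hpos bpos] by (simp_all add: B_def)
next
  assume "3 \<le> k \<and> odd k"
  then show "{x\<in>{-1..<0}. local_maximizer B x} = {}"
    using Bfun_odd_no_negative_local_maximizer[OF _ hpos bpos] by (simp add: B_def)
qed (rule Bfun_maximizers_small_beta[OF hpos bpos, of k, folded B_def])

end
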